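(* The function $\Delta$ satisfies $|\Delta(x)-\Delta(y)|\le 2|x-y|$ for all $x,y\in(0,1]$; in particular $\Delta$ is continuous on $(0,1]$. Furthermore, the function $\varepsilon\mapsto \Delta(\varepsilon)/\varepsilon^2$ is increasing on $(0,1]$, and hence $\lim_{\varepsilon\to0^+}\Delta(\varepsilon)/\varepsilon^2$ exists.
   Context: Let $\lambda$ denote Lebesgue measure on $\mathbb{R}$. A set $C\subseteq\mathbb{R}$ is symmetric if there is a number $c$ such that $c+x\in C$ if and only if $c-x\in C$. For a measurable $A\subseteq\mathbb{R}$ let $D(A):=\sup\{\lambda(C): C\subseteq A,\ C \text{ measurable and symmetric}\}$. For $0\le\varepsilon\le1$ let $\Delta(\varepsilon):=\inf\{D(A): A\subseteq[0,1) \text{ measurable},\ \lambda(A)=\varepsilon\}$ (equivalently, the supremum of $\delta$ such that every measurable subset of $[0,1)$ of measure $\varepsilon$ contains a symmetric subset of measure $\delta$). *)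

theory Defs
  imports "HOL-Analysis.Analysis"
begin

definition symmetric_set :: "real set \<Rightarrow> bool" where
  "symmetric_set C \<longleftrightarrow> (\<exists>c. \<forall>x. c + x \<in> C \<longleftrightarrow> c - x \<in> C)"

definition D :: "real set \<Rightarrow> real" where
  "D A = Sup {measure lebesgue C | C. C \<subseteq> A \<and> C \<in> sets lebesgue \<and> symmetric_set C}"

definition Delta :: "real \<Rightarrow> real" where
  "Delta \<epsilon> = Inf {D A | A. A \<subseteq> {0..<1} \<and> A \<in> sets lebesgue \<and> measure lebesgue A = \<epsilon>}"

end

theory Submission
  imports Defs "HOL-Number_Theory.Number_Theory"
begin

text \<open>
  \<open>D A\<close> is the supremum over \<open>t\<close> of the measure of \<open>A \<inter> (t - A)\<close>, the largest subset of \<open>A\<close>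
  symmetric about \<open>t / 2\<close>. Shrinking \<open>A\<close> does not increase \<open>D A\<close>, and adding a set \<open>W\<close> increases it by
  at most \<open>2 |W|\<close>, since \<open>(A \<union> W) \<inter> (t - (A \<union> W)) \<subseteq> (A \<inter> (t - A)) \<union> W \<union> (t - W)\<close>. Since a set of
  measure \<open>x\<close> can be shrunk or enlarged to any other measure inside \<open>[0, 1)\<close>, \<open>Delta\<close> is monotone
  and \<open>2\<close>-Lipschitz.

  The monotonicity of \<open>Delta \<epsilon> / \<epsilon>\<^sup>2\<close> amounts to \<open>Delta (r \<epsilon>) \<le> r\<^sup>2 D A\<close> for every \<open>A\<close> of measure
  \<open>\<epsilon>\<close> and \<open>0 \<le> r \<le> 1\<close>. Take an \<open>m\<close>-periodic set of integers \<open>s\<close> of density about \<open>r\<close> all of whose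
  reflected correlations \<open>|s \<inter> (j - s)| / m\<close> are at most about \<open>r\<^sup>2\<close>, and keep only the points
  \<open>x \<in> A\<close> with \<open>\<lfloor>x / h\<rfloor> \<in> s\<close>. For small \<open>h\<close> the resulting set \<open>B\<close> has measure about \<open>r \<epsilon>\<close> and
  \<open>|B \<inter> (t - B)| \<lesssim> r\<^sup>2 |A \<inter> (t - A)|\<close> for all \<open>t\<close>, so \<open>Delta (r \<epsilon>) \<lesssim> D B \<lesssim> r\<^sup>2 D A\<close>.
  The quadratic residues modulo a prime \<open>p \<equiv> 3 (mod 4)\<close> are such a set for \<open>r = 1/2\<close>, by
  the evaluation of a Jacobsthal sum; complements and products of such sets give all dyadic \<open>r\<close>,
  and hence all \<open>r\<close> in the limit.
\<close>

section \<open>Symmetric subsets\<close>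

lemma reflect_eq_image: "{x::real. t - x \<in> X} = (\<lambda>x. t + (-1) *\<^sub>R x) ` X"
  by (auto simp: image_iff intro!: bexI[of _ "t - _"])

lemma emeasure_reflect: "emeasure lebesgue {x::real. t - x \<in> X} = emeasure lebesgue X"
  unfolding reflect_eq_image using emeasure_lebesgue_affine[of "-1" t X] by simp

lemma measure_reflect: "measure lebesgue {x::real. t - x \<in> X} = measure lebesgue X"
  unfolding reflect_eq_image using measure_lebesgue_affine[of "-1" t X] by simp

lemma sets_reflect:
  assumes "X \<in> sets lebesgue"
  shows "{x::real. t - x \<in> X} \<in> sets lebesgue"
proof -
  have "(\<lambda>x::real. t - x) \<in> lebesgue \<rightarrow>\<^sub>M lebesgue"
    using lebesgue_affine_measurable[where c = "\<lambda>_. -1" and t = t] by simp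
  from measurable_sets[OF this assms] show ?thesis by (simp add: vimage_def)
qed

lemma lmeasurable_reflect: "X \<in> lmeasurable \<Longrightarrow> {x::real. t - x \<in> X} \<in> lmeasurable"
  by (auto simp: fmeasurable_def emeasure_reflect intro: sets_reflect)

lemma lmeasurable_Int_reflect:
  "A \<in> lmeasurable \<Longrightarrow> A \<inter> {x::real. t - x \<in> A} \<in> lmeasurable"
  by (intro fmeasurable_Int_fmeasurable sets_reflect fmeasurableD)

lemma symmetric_set_Int_reflect: "symmetric_set (A \<inter> {x::real. t - x \<in> A})"
  unfolding symmetric_set_def by (rule exI[of _ "t / 2"]) (auto simp: algebra_simps)

lemma symmetric_set_subset_Int_reflect:
  assumes "symmetric_set C" "C \<subseteq> A"
  obtains t where "C \<subseteq> A \<inter> {x::real. t - x \<in> A}"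
proof -
  obtain c where c: "\<And>x. c + x \<in> C \<longleftrightarrow> c - x \<in> C"
    using assms(1) unfolding symmetric_set_def by blast
  have "2 * c - x \<in> C" if "x \<in> C" for x
    using c[of "x - c"] that by (simp add: algebra_simps)
  then show thesis using assms(2) by (intro that[of "2 * c"]) auto
qed

lemma D_upper:
  assumes "A \<in> lmeasurable"
  shows "measure lebesgue (A \<inter> {x. t - x \<in> A}) \<le> D A"
  unfolding D_def
proof (rule cSup_upper)
  show "bdd_above {measure lebesgue C |C. C \<subseteq> A \<and> C \<in> sets lebesgue \<and> symmetric_set C}"
    using assms by (auto intro!: bdd_aboveI[of _ "measure lebesgue A"] measure_mono_fmeasurable)
  show "measure lebesgue (A \<inter> {x. t - x \<in> A})
      \<in> {measure lebesgue C |C. C \<subseteq> A \<and> C \<in> sets lebesgue \<and> symmetric_set C}"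
    using lmeasurable_Int_reflect[OF assms] symmetric_set_Int_reflect by blast
qed

lemma D_least:
  assumes A: "A \<in> lmeasurable" and le: "\<And>t. measure lebesgue (A \<inter> {x. t - x \<in> A}) \<le> c"
  shows "D A \<le> c"
  unfolding D_def
proof (rule cSup_least)
  have "symmetric_set {}" unfolding symmetric_set_def by simp
  then show "{measure lebesgue C |C. C \<subseteq> A \<and> C \<in> sets lebesgue \<and> symmetric_set C} \<noteq> {}"
    by blast
next
  fix y assume "y \<in> {measure lebesgue C |C. C \<subseteq> A \<and> C \<in> sets lebesgue \<and> symmetric_set C}"
  then obtain C where C: "y = measure lebesgue C" "C \<subseteq> A" "C \<in> sets lebesgue" "symmetric_set C"
    by blast
  obtain t where "C \<subseteq> A \<inter> {x. t - x \<in> A}"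
    using symmetric_set_subset_Int_reflect[OF C(4,2)] .
  then have "y \<le> measure lebesgue (A \<inter> {x. t - x \<in> A})"
    using C(1,3) lmeasurable_Int_reflect[OF A] by (simp add: measure_mono_fmeasurable)
  then show "y \<le> c" using le[of t] by linarith
qed

lemma D_nonneg: "A \<in> lmeasurable \<Longrightarrow> 0 \<le> D A"
  using D_upper[of A 0] by (meson measure_nonneg order_trans)

lemma D_le_measure:
  assumes "A \<in> lmeasurable"
  shows "D A \<le> measure lebesgue A"
proof (rule D_least[OF assms])
  fix t show "measure lebesgue (A \<inter> {x. t - x \<in> A}) \<le> measure lebesgue A"
    by (rule measure_mono_fmeasurable) (use lmeasurable_Int_reflect[OF assms] assms in auto)
qed

lemma D_mono:
  assumes A: "A \<in> lmeasurable" and B: "B \<subseteq> A" "B \<in> sets lebesgue"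
  shows "D B \<le> D A"
proof (rule D_least)
  show B_lmeas: "B \<in> lmeasurable" using A B by (rule fmeasurableI2)
  fix t
  have "measure lebesgue (B \<inter> {x. t - x \<in> B}) \<le> measure lebesgue (A \<inter> {x. t - x \<in> A})"
    using B lmeasurable_Int_reflect[OF A] lmeasurable_Int_reflect[OF B_lmeas]
    by (intro measure_mono_fmeasurable) auto
  also have "\<dots> \<le> D A" by (rule D_upper[OF A])
  finally show "measure lebesgue (B \<inter> {x. t - x \<in> B}) \<le> D A" .
qed

lemma D_Un_le:
  assumes A: "A \<in> lmeasurable" and W: "W \<in> lmeasurable"
  shows "D (A \<union> W) \<le> D A + 2 * measure lebesgue W"
proof (rule D_least)
  show AW: "A \<union> W \<in> lmeasurable" using A W by (rule fmeasurable.Un)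
  fix t
  let ?AW = "A \<union> W"
  have "measure lebesgue (?AW \<inter> {x. t - x \<in> ?AW})
      \<le> measure lebesgue ((A \<inter> {x. t - x \<in> A}) \<union> W \<union> {x. t - x \<in> W})"
    using W lmeasurable_Int_reflect[OF A] lmeasurable_Int_reflect[OF AW] lmeasurable_reflect[OF W]
    by (intro measure_mono_fmeasurable) auto
  also have "\<dots> \<le> measure lebesgue (A \<inter> {x. t - x \<in> A}) + measure lebesgue W
      + measure lebesgue {x. t - x \<in> W}"
    using lmeasurable_Int_reflect[OF A] lmeasurable_reflect[OF W] W
    by (intro order.trans[OF measure_Un_le] add_right_mono measure_Un_le) (auto intro: fmeasurableD)
  also have "\<dots> \<le> D A + 2 * measure lebesgue W"
    using D_upper[OF A, of t] by (simp add: measure_reflect)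
  finally show "measure lebesgue (?AW \<inter> {x. t - x \<in> ?AW}) \<le> D A + 2 * measure lebesgue W" .
qed

section \<open>Lipschitz continuity of \<open>Delta\<close>\<close>

lemma lmeasurable_subset_unit:
  assumes "A \<subseteq> {0..<1::real}" "A \<in> sets lebesgue"
  shows "A \<in> lmeasurable"
proof (rule fmeasurableI2[OF lmeasurable_cbox[of 0 1]])
  show "A \<subseteq> cbox 0 1" using assms(1) by auto
qed (use assms(2) in simp)

lemma D_nonneg_subset_unit: "A \<subseteq> {0..<1::real} \<Longrightarrow> A \<in> sets lebesgue \<Longrightarrow> 0 \<le> D A"
  by (rule D_nonneg[OF lmeasurable_subset_unit])

lemma Delta_lower:
  assumes "A \<subseteq> {0..<1::real}" "A \<in> sets lebesgue" "measure lebesgue A = e"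
  shows "Delta e \<le> D A"
  unfolding Delta_def
proof (rule cInf_lower)
  show "D A \<in> {D A |A. A \<subseteq> {0..<1} \<and> A \<in> sets lebesgue \<and> measure lebesgue A = e}"
    using assms by (intro CollectI exI[of _ A]) simp
  show "bdd_below {D A |A. A \<subseteq> {0..<1} \<and> A \<in> sets lebesgue \<and> measure lebesgue A = e}"
    by (rule bdd_belowI[of _ 0]) (auto simp: D_nonneg_subset_unit)
qed

lemma Delta_greatest:
  assumes "0 \<le> e" "e \<le> 1"
    and "\<And>A. A \<subseteq> {0..<1::real} \<Longrightarrow> A \<in> sets lebesgue \<Longrightarrow> measure lebesgue A = e \<Longrightarrow> c \<le> D A"
  shows "c \<le> Delta e"
  unfolding Delta_def
proof (rule cInf_greatest)
  have "{0..<e} \<subseteq> {0..<1::real}" "measure lebesgue {0..<e} = e"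
    using assms by auto
  then have "D {0..<e} \<in> {D A |A. A \<subseteq> {0..<1} \<and> A \<in> sets lebesgue \<and> measure lebesgue A = e}"
    by (intro CollectI exI[of _ "{0..<e}"]) simp
  then show "{D A |A. A \<subseteq> {0..<1} \<and> A \<in> sets lebesgue \<and> measure lebesgue A = e} \<noteq> {}"
    by blast
next
  fix y assume "y \<in> {D A |A. A \<subseteq> {0..<1} \<and> A \<in> sets lebesgue \<and> measure lebesgue A = e}"
  then show "c \<le> y" using assms(3) by blast
qed

lemma Delta_nonneg: "0 \<le> e \<Longrightarrow> e \<le> 1 \<Longrightarrow> 0 \<le> Delta e"
  by (rule Delta_greatest) (simp_all add: D_nonneg_subset_unit)

lemma exists_subset_measure:
  fixes A :: "real set"
  assumes A: "A \<in> sets lebesgue" "bounded A" and y: "0 \<le> y" "y \<le> measure lebesgue A"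
  obtains B where "B \<subseteq> A" "B \<in> sets lebesgue" "measure lebesgue B = y"
proof -
  obtain a where a: "A \<subseteq> {-a..a}"
    using bounded_subset_cbox_symmetric[OF A(2)] by auto
  define g where "g s = measure lebesgue (A \<inter> {..<s})" for s
  have A_lmeas: "A \<in> lmeasurable"
    using a A(1) by (intro fmeasurableI2[OF lmeasurable_cbox[of "-a" a]]) auto
  have lmeas: "A \<inter> {..<s} \<in> lmeasurable" for s
    using A_lmeas by (rule fmeasurable_Int_fmeasurable) simp
  have g_le: "g s \<le> g s' \<and> g s' \<le> g s + (s' - s)" if "s \<le> s'" for s s'
  proof
    show "g s \<le> g s'"
      unfolding g_def using that lmeas by (intro measure_mono_fmeasurable) auto
    have "g s' \<le> measure lebesgue ((A \<inter> {..<s}) \<union> {s..s'})"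
      unfolding g_def using lmeas by (intro measure_mono_fmeasurable) auto
    also have "\<dots> \<le> g s + measure lebesgue {s..s'}"
      unfolding g_def using fmeasurableD[OF lmeas] by (intro measure_Un_le) auto
    finally show "g s' \<le> g s + (s' - s)" using that by simp
  qed
  have "1-lipschitz_on UNIV g"
  proof (rule lipschitz_onI)
    fix s s' :: real
    show "dist (g s) (g s') \<le> 1 * dist s s'"
      using g_le[of s s'] g_le[of s' s] by (cases "s \<le> s'") (auto simp: dist_real_def)
  qed simp
  then have "continuous_on {-a..\<bar>a\<bar> + 1} g"
    by (rule lipschitz_on_continuous_on[OF lipschitz_on_subset]) simp
  moreover have "A \<inter> {..<-a} = {}" "A \<inter> {..<\<bar>a\<bar> + 1} = A"
    using a by auto
  then have "g (-a) = 0" "g (\<bar>a\<bar> + 1) = measure lebesgue A"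
    unfolding g_def by simp_all
  moreover have "-a \<le> \<bar>a\<bar> + 1" by linarith
  ultimately obtain s where "g s = y"
    using IVT'[of g "-a" y "\<bar>a\<bar> + 1"] y by auto
  then show thesis unfolding g_def by (intro that[of "A \<inter> {..<s}"]) (auto intro: fmeasurableD[OF lmeas])
qed

lemma Delta_mono:
  assumes "0 \<le> y" "y \<le> x" "x \<le> 1"
  shows "Delta y \<le> Delta x"
proof (rule Delta_greatest)
  fix A assume A: "A \<subseteq> {0..<1::real}" "A \<in> sets lebesgue" "measure lebesgue A = x"
  have "bounded A" using A(1) bounded_subset[OF bounded_Ico] by blast
  obtain B where B: "B \<subseteq> A" "B \<in> sets lebesgue" "measure lebesgue B = y"
    by (rule exists_subset_measure[OF A(2) \<open>bounded A\<close>]) (use assms A(3) in auto)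
  have "Delta y \<le> D B" using A B by (intro Delta_lower) auto
  also have "\<dots> \<le> D A" using A B by (intro D_mono lmeasurable_subset_unit)
  finally show "Delta y \<le> D A" .
qed (use assms in auto)

lemma Delta_le_add:
  assumes "0 \<le> y" "y \<le> x" "x \<le> 1"
  shows "Delta x \<le> Delta y + 2 * (x - y)"
proof -
  have "Delta x - 2 * (x - y) \<le> Delta y"
  proof (rule Delta_greatest)
    fix A assume A: "A \<subseteq> {0..<1::real}" "A \<in> sets lebesgue" "measure lebesgue A = y"
    have "measure lebesgue ({0..<1} - A) = measure lebesgue {0..<1::real} - measure lebesgue A"
      by (rule measure_Diff) (use A in auto)
    then have "x - y \<le> measure lebesgue ({0..<1} - A)" using A(3) assms by simp
    moreover have "{0..<1} - A \<in> sets lebesgue" "bounded ({0..<1} - A)" "0 \<le> x - y"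
      using A(2) bounded_subset[OF bounded_Ico] assms by auto
    ultimately obtain W where W: "W \<subseteq> {0..<1} - A" "W \<in> sets lebesgue" "measure lebesgue W = x - y"
      by (metis exists_subset_measure)
    then have "W \<subseteq> {0..<1}" "A \<inter> W = {}" by auto
    then have A_lmeas: "A \<in> lmeasurable" and W_lmeas: "W \<in> lmeasurable"
      using A(1,2) W(2) by (simp_all add: lmeasurable_subset_unit)
    have "measure lebesgue (A \<union> W) = x"
      using measure_Un3[OF A_lmeas W_lmeas] \<open>A \<inter> W = {}\<close> W(3) A(3) by simp
    then have "Delta x \<le> D (A \<union> W)"
      using A(1,2) W(2) \<open>W \<subseteq> {0..<1}\<close> by (intro Delta_lower) auto
    also have "\<dots> \<le> D A + 2 * (x - y)"
      using D_Un_le[OF A_lmeas W_lmeas] W(3) by simp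
    finally show "Delta x - 2 * (x - y) \<le> D A" by simp
  qed (use assms in auto)
  then show ?thesis by linarith
qed

lemma Delta_lipschitz:
  assumes "x \<in> {0..1}" "y \<in> {0..1}"
  shows "\<bar>Delta x - Delta y\<bar> \<le> 2 * \<bar>x - y\<bar>"
proof (cases "x \<le> y")
  case True
  then show ?thesis using assms Delta_mono[of x y] Delta_le_add[of x y] by auto
next
  case False
  then show ?thesis using assms Delta_mono[of y x] Delta_le_add[of y x] by auto
qed

section \<open>Periodic patterns\<close>

lemma card_Collect_mem_eq_sum:
  assumes "finite A"
  shows "card {x\<in>A. P x} = (\<Sum>x\<in>A. of_bool (P x))"
proof -
  have "{x\<in>A. P x} = A \<inter> {x. P x}" by blast
  then show ?thesis using assms by simp
qed

lemma int_card_Collect_mem_eq_sum: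
  assumes "finite A"
  shows "int (card {x\<in>A. P x}) = (\<Sum>x\<in>A. of_bool (P x))"
  unfolding card_Collect_mem_eq_sum[OF assms] by (simp only: of_nat_sum of_nat_of_bool)

lemma sum_mod_reindex:
  fixes f :: "int \<Rightarrow> int" and g :: "int \<Rightarrow> 'a::comm_monoid_add"
  assumes "inj_on (\<lambda>x. f x mod m) {0..<m}"
  shows "(\<Sum>x\<in>{0..<m}. g (f x mod m)) = (\<Sum>x\<in>{0..<m}. g x)"
proof (cases "m > 0")
  case True
  then have "(\<lambda>x. f x mod m) ` {0..<m} = {0..<m}"
    using assms by (intro endo_inj_surj) auto
  then show ?thesis
    using sum.reindex[OF assms, of g] by simp
qed simp

lemma card_mod_reindex:
  fixes f :: "int \<Rightarrow> int"
  assumes "\<And>x. R (x mod m) = R x" "inj_on (\<lambda>x. f x mod m) {0..<m}"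
  shows "card {x\<in>{0..<m}. R (f x)} = card {x\<in>{0..<m}. R x}"
  unfolding card_Collect_mem_eq_sum[OF finite_atLeastLessThan_int]
  using sum_mod_reindex[OF assms(2), of "\<lambda>x. of_bool (R x) :: nat"] assms(1) by simp

lemma eq_if_dvd_diff:
  fixes x y m :: int
  assumes "x \<in> {0..<m}" "y \<in> {0..<m}" "m dvd (x - y)"
  shows "x = y"
  using assms by (metis atLeastLessThan_iff mod_eq_dvd_iff mod_pos_pos_trivial)

lemma inj_on_mod_add: "inj_on (\<lambda>x. (c + x) mod m) {0..<m::int}"
  by (rule inj_onI, rule eq_if_dvd_diff) (auto simp: mod_eq_dvd_iff)

lemma inj_on_mod_diff: "inj_on (\<lambda>x. (c - x) mod m) {0..<m::int}"
  by (rule inj_onI, rule eq_if_dvd_diff) (auto simp: mod_eq_dvd_iff dvd_diff_commute)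

text \<open>A random set of density \<open>K / m\<close> has reflected autocorrelations close to \<open>K\<^sup>2 / m\<close>;
  patterns with \<open>M \<approx> K\<^sup>2 / m\<close> serve as its deterministic substitute.\<close>

definition pattern :: "nat \<Rightarrow> (int \<Rightarrow> bool) \<Rightarrow> nat \<Rightarrow> nat \<Rightarrow> bool" where
  "pattern m s K M \<longleftrightarrow> m > 0 \<and> (\<forall>x. s (x mod int m) = s x) \<and> card {x\<in>{0..<int m}. s x} = K \<and>
     (\<forall>j. card {x\<in>{0..<int m}. s x \<and> s (j - x)} \<le> M)"

lemma pattern_card_le:
  assumes "pattern m s K M"
  shows "K \<le> m"
proof -
  have "card {x\<in>{0..<int m}. s x} \<le> card {0..<int m}" by (rule card_mono) auto
  then show ?thesis using assms unfolding pattern_def by simp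
qed

lemma pattern_card_shift:
  assumes "pattern m s K M"
  shows "card {k\<in>{0..<int m}. s (c + k)} = K"
  using assms card_mod_reindex[OF _ inj_on_mod_add, of s "int m" c] unfolding pattern_def by auto

lemma pattern_card_shift_reflect:
  assumes "pattern m s K M"
  shows "card {k\<in>{0..<int m}. s (c + k) \<and> s (c' - k)} \<le> M"
proof -
  have per: "s (x mod int m) = s x" for x
    using assms unfolding pattern_def by blast
  define R where "R y = (s y \<and> s (c + c' - y))" for y
  have "R (y mod int m) = R y" for y
    unfolding R_def using per[of "c + c' - y mod int m"] per[of "c + c' - y"] per[of y]
    by (simp add: mod_diff_right_eq)
  then have "card {k\<in>{0..<int m}. R (c + k)} = card {x\<in>{0..<int m}. R x}"
    by (rule card_mod_reindex[OF _ inj_on_mod_add])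
  then show ?thesis
    using assms unfolding pattern_def R_def by (auto simp: algebra_simps)
qed

lemma pattern_Not:
  assumes "pattern m s K M"
  shows "pattern m (\<lambda>x. \<not> s x) (m - K) (m + M - 2 * K)"
proof -
  have per: "\<And>x. s (x mod int m) = s x" and cK: "card {x\<in>{0..<int m}. s x} = K"
    and cM: "\<And>j. card {x\<in>{0..<int m}. s x \<and> s (j - x)} \<le> M"
    using assms unfolding pattern_def by auto
  let ?I = "{0..<int m}"
  have fin: "finite {x\<in>?I. P x}" for P by (rule finite_subset[of _ ?I]) auto
  have "card (?I - {x\<in>?I. s x}) = m - K"
    using cK by (subst card_Diff_subset[OF fin]) auto
  moreover have "card {x\<in>?I. \<not> s x \<and> \<not> s (j - x)} \<le> m + M - 2 * K" for j
  proof -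
    let ?X = "{x\<in>?I. s x}" and ?Y = "{x\<in>?I. s (j - x)}"
    have "card ?Y = K"
      using card_mod_reindex[of s "int m" "\<lambda>x. j - x", OF per inj_on_mod_diff] cK by simp
    moreover have "card (?X \<union> ?Y) + card (?X \<inter> ?Y) = card ?X + card ?Y"
      using card_Un_Int[OF fin fin] by simp
    moreover have "?X \<inter> ?Y = {x\<in>?I. s x \<and> s (j - x)}" by auto
    ultimately have union: "card (?X \<union> ?Y) + card {x\<in>?I. s x \<and> s (j - x)} = 2 * K"
      using cK by simp
    have "card (?X \<union> ?Y) \<le> card ?I"
      by (rule card_mono) auto
    moreover have "{x\<in>?I. \<not> s x \<and> \<not> s (j - x)} = ?I - (?X \<union> ?Y)" by auto
    moreover have "card (?I - (?X \<union> ?Y)) = card ?I - card (?X \<union> ?Y)"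
      by (rule card_Diff_subset) (use fin in auto)
    ultimately have "card {x\<in>?I. \<not> s x \<and> \<not> s (j - x)} = m - card (?X \<union> ?Y)"
      by simp
    then show ?thesis
      using union cM[of j] by linarith
  qed
  moreover have "?I - {x\<in>?I. s x} = {x\<in>?I. \<not> s x}" by auto
  ultimately show ?thesis
    using assms per unfolding pattern_def by auto
qed

lemma bij_betw_mod_div:
  fixes m n :: int
  assumes "0 < n"
  shows "bij_betw (\<lambda>x. (x mod n, x div n)) {0..<m * n} ({0..<n} \<times> {0..<m})"
proof (rule bij_betwI[where g = "\<lambda>(b, a). a * n + b"])
  have "x div n < m" if "0 \<le> x" "x < m * n" for x
  proof -
    have "x div n * n \<le> x"
      using div_mult_mod_eq[of x n] pos_mod_sign[OF assms, of x] by linarith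
    then show ?thesis
      using that mult_less_cancel_right_pos[OF assms] by fastforce
  qed
  then show "(\<lambda>x. (x mod n, x div n)) \<in> {0..<m * n} \<rightarrow> {0..<n} \<times> {0..<m}"
    using assms by (auto simp: pos_imp_zdiv_nonneg_iff)
  have "a * n + b < m * n" if "a < m" "b < n" for a b
  proof -
    have "a * n + b < (a + 1) * n" using that by (simp add: algebra_simps)
    also have "\<dots> \<le> m * n" using that assms by (intro mult_right_mono) auto
    finally show ?thesis .
  qed
  then show "(\<lambda>(b, a). a * n + b) \<in> {0..<n} \<times> {0..<m} \<rightarrow> {0..<m * n}"
    using assms by auto
qed (use assms in auto)

lemma card_mod_div:
  fixes m n :: int
  assumes "0 < n"
  shows "card {x\<in>{0..<m * n}. P (x mod n) (x div n)} = (\<Sum>b\<in>{0..<n}. card {a\<in>{0..<m}. P b a})"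
proof -
  have "bij_betw (\<lambda>x. (x mod n, x div n)) {x\<in>{0..<m * n}. P (x mod n) (x div n)}
      (SIGMA b:{0..<n}. {a\<in>{0..<m}. P b a})"
  proof -
    have "{y\<in>{0..<n} \<times> {0..<m}. P (fst y) (snd y)} = (SIGMA b:{0..<n}. {a\<in>{0..<m}. P b a})"
      by auto
    then show ?thesis
      using bij_betw_Collect[OF bij_betw_mod_div[OF assms, of m], of "\<lambda>y. P (fst y) (snd y)"] by simp
  qed
  then have "card {x\<in>{0..<m * n}. P (x mod n) (x div n)} = card (SIGMA b:{0..<n}. {a\<in>{0..<m}. P b a})"
    by (rule bij_betw_same_card)
  also have "\<dots> = (\<Sum>b\<in>{0..<n}. card {a\<in>{0..<m}. P b a})"
    by (rule card_SigmaI) (auto intro: finite_subset[of _ "{0..<m}"])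
  finally show ?thesis .
qed

lemma div_diff_mod:
  fixes j x n :: int
  assumes "n \<noteq> 0"
  shows "(j - x) div n = (j - x mod n) div n - x div n"
proof -
  have eq: "j - x = (j - x mod n) + (- (x div n)) * n"
    using div_mult_mod_eq[of x n] by linarith
  show ?thesis unfolding eq div_mult_self1[OF assms] by simp
qed

lemma card_Collect_div_mod:
  fixes m n :: int
  assumes "0 < n"
  shows "card {x\<in>{0..<m * n}. s1 (x div n) \<and> s2 (x mod n)}
    = card {a\<in>{0..<m}. s1 a} * card {b\<in>{0..<n}. s2 b}"
proof -
  have "card {x\<in>{0..<m * n}. s1 (x div n) \<and> s2 (x mod n)}
      = (\<Sum>b\<in>{0..<n}. card {a\<in>{0..<m}. s2 b \<and> s1 a})"
    using card_mod_div[where P = "\<lambda>b a. s2 b \<and> s1 a", OF assms] by (simp add: conj_commute)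
  also have "\<dots> = (\<Sum>b\<in>{0..<n}. card {a\<in>{0..<m}. s1 a} * of_bool (s2 b))"
    by (intro sum.cong) auto
  also have "\<dots> = card {a\<in>{0..<m}. s1 a} * card {b\<in>{0..<n}. s2 b}"
    unfolding sum_distrib_left[symmetric] card_Collect_mem_eq_sum[OF finite_atLeastLessThan_int] ..
  finally show ?thesis .
qed

lemma card_Collect_div_mod_reflect_le:
  fixes m n :: int
  assumes n: "0 < n" and per2: "\<And>x. s2 (x mod n) = s2 x"
    and M1: "\<And>j. card {a\<in>{0..<m}. s1 a \<and> s1 (j - a)} \<le> M1"
    and M2: "\<And>j. card {b\<in>{0..<n}. s2 b \<and> s2 (j - b)} \<le> M2"
  shows "card {x\<in>{0..<m * n}. (s1 (x div n) \<and> s2 (x mod n)) \<and> s1 ((j - x) div n) \<and> s2 ((j - x) mod n)}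
    \<le> M1 * M2"
proof -
  define P where "P b a = (s2 b \<and> s2 (j - b) \<and> s1 a \<and> s1 ((j - b) div n - a))" for b a
  have "(s1 (x div n) \<and> s2 (x mod n)) \<and> s1 ((j - x) div n) \<and> s2 ((j - x) mod n)
      \<longleftrightarrow> P (x mod n) (x div n)" for x
    using div_diff_mod[OF less_imp_neq[OF n, symmetric], of j x] per2[of "j - x mod n"]
    unfolding P_def by (auto simp: mod_diff_right_eq)
  then have "{x\<in>{0..<m * n}. (s1 (x div n) \<and> s2 (x mod n)) \<and> s1 ((j - x) div n) \<and> s2 ((j - x) mod n)}
      = {x\<in>{0..<m * n}. P (x mod n) (x div n)}"
    by simp
  then have "card {x\<in>{0..<m * n}. (s1 (x div n) \<and> s2 (x mod n)) \<and> s1 ((j - x) div n) \<and> s2 ((j - x) mod n)}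
      = (\<Sum>b\<in>{0..<n}. card {a\<in>{0..<m}. P b a})"
    using card_mod_div[OF n] by simp
  also have "\<dots> \<le> (\<Sum>b\<in>{0..<n}. M1 * of_bool (s2 b \<and> s2 (j - b)))"
  proof (rule sum_mono)
    fix b
    show "card {a\<in>{0..<m}. P b a} \<le> M1 * of_bool (s2 b \<and> s2 (j - b))"
      using M1[of "(j - b) div n"] by (cases "s2 b \<and> s2 (j - b)") (auto simp: P_def)
  qed
  also have "\<dots> = M1 * card {b\<in>{0..<n}. s2 b \<and> s2 (j - b)}"
    unfolding sum_distrib_left[symmetric] card_Collect_mem_eq_sum[OF finite_atLeastLessThan_int] ..
  also have "\<dots> \<le> M1 * M2"
    using M2[of j] by simp
  finally show ?thesis .
qed

lemma pattern_times:
  assumes p1: "pattern m1 s1 K1 M1" and p2: "pattern m2 s2 K2 M2"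
  shows "pattern (m1 * m2) (\<lambda>x. s1 (x div int m2) \<and> s2 (x mod int m2)) (K1 * K2) (M1 * M2)"
proof -
  have m2: "0 < int m2" and per1: "\<And>x. s1 (x mod int m1) = s1 x" and per2: "\<And>x. s2 (x mod int m2) = s2 x"
    and M1: "\<And>j. card {x\<in>{0..<int m1}. s1 x \<and> s1 (j - x)} \<le> M1"
    and M2: "\<And>j. card {x\<in>{0..<int m2}. s2 x \<and> s2 (j - x)} \<le> M2"
    using p1 p2 unfolding pattern_def by auto
  have "s1 (x mod int (m1 * m2) div int m2) = s1 (x div int m2)"
    "x mod int (m1 * m2) mod int m2 = x mod int m2" for x
  proof -
    have "x mod (int m2 * int m1) = int m2 * (x div int m2 mod int m1) + x mod int m2"
      by (rule mod_mult2_eq')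
    then show "s1 (x mod int (m1 * m2) div int m2) = s1 (x div int m2)"
      "x mod int (m1 * m2) mod int m2 = x mod int m2"
      using per1[of "x div int m2"] m2 by (simp_all add: mult.commute)
  qed
  then show ?thesis
    using p1 p2 card_Collect_div_mod[OF m2, of "int m1" s1 s2]
      card_Collect_div_mod_reflect_le[OF m2 per2 M1 M2]
    unfolding pattern_def by auto
qed

section \<open>Thinning a set along a pattern\<close>

lemma measure_translate_Diff_small:
  fixes A :: "real set"
  assumes A: "A \<in> lmeasurable" "bounded A" and e: "e > 0"
  obtains d where "d > 0" "\<And>s. \<bar>s\<bar> < d \<Longrightarrow> measure lebesgue ((+) s ` A - A) < e"
proof -
  obtain G where G: "open G" "A \<subseteq> G" "G - A \<in> lmeasurable" "emeasure lebesgue (G - A) < ennreal (e/2)"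
    using sets_lebesgue_outer_open[OF fmeasurableD[OF A(1)], of "e/2"] e by auto
  obtain T where T: "closed T" "T \<subseteq> A" "A - T \<in> lmeasurable" "emeasure lebesgue (A - T) < ennreal (e/2)"
    using sets_lebesgue_inner_closed[OF fmeasurableD[OF A(1)], of "e/2"] e by auto
  have "compact T" using T(1,2) A(2) bounded_subset compact_eq_bounded_closed by blast
  moreover have "T \<inter> - G = {}" using T(2) G(2) by auto
  ultimately obtain d where d: "d > 0" "\<And>x y. x \<in> T \<Longrightarrow> y \<in> - G \<Longrightarrow> d \<le> dist x y"
    using separate_compact_closed[of T "- G"] G(1) by blast
  show thesis
  proof (rule that[OF d(1)])
    fix s :: real assume s: "\<bar>s\<bar> < d"
    have "(+) s ` A - A \<subseteq> (G - A) \<union> (+) s ` (A - T)"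
    proof
      fix x assume x: "x \<in> (+) s ` A - A"
      then obtain a where a: "a \<in> A" "x = s + a" by auto
      have "x \<in> G" if "a \<in> T"
        using d(2)[OF that, of x] s a(2) by (force simp: dist_real_def)
      then show "x \<in> (G - A) \<union> (+) s ` (A - T)" using x a by auto
    qed
    then have "measure lebesgue ((+) s ` A - A) \<le> measure lebesgue ((G - A) \<union> (+) s ` (A - T))"
      using G(3) T(3) A(1) by (intro measure_mono_fmeasurable)
        (auto intro: lebesgue_sets_translation measurable_translation fmeasurableD)
    also have "\<dots> \<le> measure lebesgue (G - A) + measure lebesgue ((+) s ` (A - T))"
      by (rule measure_Un_le) (use G(3) T(3) in \<open>auto intro: fmeasurableD measurable_translation\<close>)
    also have "\<dots> = measure lebesgue (G - A) + measure lebesgue (A - T)"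
      by (simp add: measure_translation)
    also have "\<dots> < e"
      using G(3,4) T(3,4) by (simp add: emeasure_eq_measure2 ennreal_less_iff)
    finally show "measure lebesgue ((+) s ` A - A) < e" .
  qed
qed

lemma measure_Int_le_translate:
  fixes a :: real
  assumes X: "X \<in> lmeasurable" and Y: "Y \<in> sets lebesgue"
  shows "measure lebesgue (X \<inter> Y) \<le> measure lebesgue (X \<inter> (+) a ` Y) + measure lebesgue ((+) a ` X - X)"
proof -
  have aX: "(+) a ` X \<in> lmeasurable" and aY: "(+) a ` Y \<in> sets lebesgue"
    using X Y by (auto intro: measurable_translation lebesgue_sets_translation)
  have "measure lebesgue (X \<inter> Y) = measure lebesgue ((+) a ` X \<inter> (+) a ` Y)"
    using measure_translation[of a "X \<inter> Y"] by (simp add: image_Int)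
  also have "\<dots> \<le> measure lebesgue ((X \<inter> (+) a ` Y) \<union> ((+) a ` X - X))"
    using X aX aY by (intro measure_mono_fmeasurable) (auto intro: fmeasurable_Int_fmeasurable)
  also have "\<dots> \<le> measure lebesgue (X \<inter> (+) a ` Y) + measure lebesgue ((+) a ` X - X)"
    using X aX aY by (intro measure_Un_le) auto
  finally show ?thesis .
qed

lemma translate_eq_Collect: "(+) (a::real) ` Y = {x. x - a \<in> Y}"
  by (auto simp: image_iff intro!: bexI[of _ "_ - a"])

lemma measure_translate_Diff_Int_reflect:
  fixes A :: "real set" and a t :: real
  assumes A: "A \<in> lmeasurable"
  defines "E \<equiv> A \<inter> {x. t - x \<in> A}"
  shows "measure lebesgue ((+) (- a) ` E - E)
    \<le> measure lebesgue ((+) (- a) ` A - A) + measure lebesgue ((+) a ` A - A)"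
proof -
  have S1: "(+) (- a) ` A - A \<in> lmeasurable"
    using A by (intro fmeasurable_Diff measurable_translation fmeasurableD)
  have S2: "{x. t - x \<in> (+) a ` A - A} \<in> lmeasurable"
    using A by (intro lmeasurable_reflect fmeasurable_Diff measurable_translation fmeasurableD)
  have "(+) (- a) ` E - E \<subseteq> ((+) (- a) ` A - A) \<union> {x. t - x \<in> (+) a ` A - A}"
    unfolding E_def translate_eq_Collect by (auto simp: algebra_simps)
  moreover have "(+) (- a) ` E - E \<in> sets lebesgue"
    unfolding E_def using lmeasurable_Int_reflect[OF A]
    by (intro fmeasurableD fmeasurable_Diff measurable_translation)
  ultimately have "measure lebesgue ((+) (- a) ` E - E)
      \<le> measure lebesgue (((+) (- a) ` A - A) \<union> {x. t - x \<in> (+) a ` A - A})"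
    using S1 S2 by (intro measure_mono_fmeasurable fmeasurable.Un)
  also have "\<dots> \<le> measure lebesgue ((+) (- a) ` A - A) + measure lebesgue ((+) a ` A - A)"
    using measure_Un_le[OF fmeasurableD[OF S1] fmeasurableD[OF S2]]
      measure_reflect[of t "(+) a ` A - A"] by linarith
  finally show ?thesis .
qed

lemma translate_floor_set:
  fixes h :: real and k :: int
  assumes "h > 0"
  shows "(+) (- (k * h)) ` {x. Q \<lfloor>x / h\<rfloor> \<lfloor>(t - x) / h\<rfloor>} = {x. Q (\<lfloor>x / h\<rfloor> + k) (\<lfloor>(t - x) / h\<rfloor> - k)}"
proof -
  have "(x + k * h) / h = x / h + k" "(t - (x + k * h)) / h = (t - x) / h - k" for x
    using assms by (simp_all add: field_simps)
  then show ?thesis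
    unfolding translate_eq_Collect by simp
qed

lemma sets_lebesgue_floor: "{x::real. Q \<lfloor>x / h\<rfloor> \<lfloor>(t - x) / h\<rfloor>} \<in> sets lebesgue"
proof -
  have "{x::real. Q \<lfloor>x / h\<rfloor> \<lfloor>(t - x) / h\<rfloor>} \<in> sets borel" by measurable
  then show ?thesis by (simp add: sets_completionI_sets)
qed

lemma sum_indicator_Int:
  assumes "finite I"
  shows "(\<Sum>k\<in>I. indicator (X \<inter> Y k) x :: real) = indicator X x * real (card {k\<in>I. x \<in> Y k})"
  using assms by (simp add: indicator_def card_Collect_mem_eq_sum of_bool_def sum.If_cases)

lemma sum_measure_Int_le:
  fixes X :: "real set"
  assumes I: "finite I" and X: "X \<in> lmeasurable" and Y: "\<And>k. k \<in> I \<Longrightarrow> Y k \<in> sets lebesgue"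
    and N: "\<And>x. x \<in> X \<Longrightarrow> card {k\<in>I. x \<in> Y k} \<le> N"
  shows "(\<Sum>k\<in>I. measure lebesgue (X \<inter> Y k)) \<le> N * measure lebesgue X"
proof -
  have int: "integrable lebesgue (indicator (X \<inter> Y k) :: real \<Rightarrow> real)" if "k \<in> I" for k
    using fmeasurable_Int_fmeasurable[OF X Y[OF that]] by (simp add: lmeasurable_iff_integrable)
  have "(\<Sum>k\<in>I. measure lebesgue (X \<inter> Y k)) = (\<integral>x. (\<Sum>k\<in>I. indicator (X \<inter> Y k) x) \<partial>lebesgue)"
    using int by (simp add: Bochner_Integration.integral_sum)
  also have "\<dots> \<le> (\<integral>x. real N * indicator X x \<partial>lebesgue)"
  proof (rule integral_mono)
    show "integrable lebesgue (\<lambda>x. \<Sum>k\<in>I. indicator (X \<inter> Y k) x :: real)"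
      using int by (rule Bochner_Integration.integrable_sum)
    show "integrable lebesgue (\<lambda>x. real N * indicator X x :: real)"
      using X by (simp add: lmeasurable_iff_integrable)
    show "(\<Sum>k\<in>I. indicator (X \<inter> Y k) x) \<le> real N * indicator X x" for x :: real
      using N[of x] by (cases "x \<in> X") (simp_all add: sum_indicator_Int[OF I])
  qed
  finally show ?thesis by simp
qed

lemma sum_measure_Int_ge:
  fixes X :: "real set"
  assumes I: "finite I" and X: "X \<in> lmeasurable" and Y: "\<And>k. k \<in> I \<Longrightarrow> Y k \<in> sets lebesgue"
    and N: "\<And>x. x \<in> X \<Longrightarrow> N \<le> card {k\<in>I. x \<in> Y k}"
  shows "N * measure lebesgue X \<le> (\<Sum>k\<in>I. measure lebesgue (X \<inter> Y k))"
proof -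
  have int: "integrable lebesgue (indicator (X \<inter> Y k) :: real \<Rightarrow> real)" if "k \<in> I" for k
    using fmeasurable_Int_fmeasurable[OF X Y[OF that]] by (simp add: lmeasurable_iff_integrable)
  have "real N * measure lebesgue X = (\<integral>x. real N * indicator X x \<partial>lebesgue)"
    by simp
  also have "\<dots> \<le> (\<integral>x. (\<Sum>k\<in>I. indicator (X \<inter> Y k) x) \<partial>lebesgue)"
  proof (rule integral_mono)
    show "integrable lebesgue (\<lambda>x. \<Sum>k\<in>I. indicator (X \<inter> Y k) x :: real)"
      using int by (rule Bochner_Integration.integrable_sum)
    show "integrable lebesgue (\<lambda>x. real N * indicator X x :: real)"
      using X by (simp add: lmeasurable_iff_integrable)
    show "real N * indicator X x \<le> (\<Sum>k\<in>I. indicator (X \<inter> Y k) x)" for x :: real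
      using N[of x] by (cases "x \<in> X") (simp_all add: sum_indicator_Int[OF I])
  qed
  also have "\<dots> = (\<Sum>k\<in>I. measure lebesgue (X \<inter> Y k))"
    using int by (simp add: Bochner_Integration.integral_sum)
  finally show ?thesis .
qed

text \<open>Translating by \<open>k h\<close> replaces \<open>s\<close> by
  its shift by \<open>k\<close>; for small \<open>h\<close> these translations hardly move \<open>A\<close>, so the thinned set behaves like
  the average over all \<open>m\<close> shifts, for which the pattern counts are exact.\<close>

lemma measure_Int_pattern_ge:
  fixes A :: "real set" and h :: real
  assumes A: "A \<in> lmeasurable" and p: "pattern m s K M" and h: "h > 0"
    and small: "\<And>k. k \<in> {0..<int m} \<Longrightarrow> measure lebesgue ((+) (k * h) ` A - A) \<le> \<eta>"
  shows "real K / real m * measure lebesgue A - \<eta> \<le> measure lebesgue (A \<inter> {x. s \<lfloor>x / h\<rfloor>})"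
proof -
  define P where "P k = {x. s (\<lfloor>x / h\<rfloor> + k)}" for k :: int
  have m: "real m > 0" using p by (simp add: pattern_def)
  have P_sets: "P k \<in> sets lebesgue" for k
    unfolding P_def using sets_lebesgue_floor[where Q = "\<lambda>a b. s (a + k)"] by simp
  have "real K * measure lebesgue A \<le> (\<Sum>k\<in>{0..<int m}. measure lebesgue (A \<inter> P k))"
    using pattern_card_shift[OF p] A P_sets by (intro sum_measure_Int_ge) (auto simp: P_def)
  also have "\<dots> \<le> (\<Sum>k\<in>{0..<int m}. measure lebesgue (A \<inter> P 0) + \<eta>)"
  proof (rule sum_mono)
    fix k assume k: "k \<in> {0..<int m}"
    have "(+) (k * h) ` P k = P 0"
      using translate_floor_set[OF h, where Q = "\<lambda>a b. s (a + k)" and k = "- k"] by (simp add: P_def)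
    then show "measure lebesgue (A \<inter> P k) \<le> measure lebesgue (A \<inter> P 0) + \<eta>"
      using measure_Int_le_translate[OF A P_sets[of k], where a = "k * h"] small[OF k] by simp
  qed
  also have "\<dots> = real m * (measure lebesgue (A \<inter> P 0) + \<eta>)" by simp
  finally show ?thesis
    using m unfolding P_def by (simp add: field_simps)
qed

lemma measure_Int_reflect_pattern_le:
  fixes A :: "real set" and h :: real
  assumes A: "A \<in> lmeasurable" and p: "pattern m s K M" and h: "h > 0"
    and small: "\<And>k. k \<in> {0..<int m} \<Longrightarrow>
      measure lebesgue ((+) (k * h) ` A - A) + measure lebesgue ((+) (- (k * h)) ` A - A) \<le> \<eta>"
  defines "B \<equiv> A \<inter> {x. s \<lfloor>x / h\<rfloor>}"
  shows "measure lebesgue (B \<inter> {x. t - x \<in> B})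
    \<le> real M / real m * measure lebesgue (A \<inter> {x. t - x \<in> A}) + \<eta>"
proof -
  define E where "E = A \<inter> {x. t - x \<in> A}"
  define Q where "Q k = {x. s (\<lfloor>x / h\<rfloor> + k) \<and> s (\<lfloor>(t - x) / h\<rfloor> - k)}" for k :: int
  have m: "real m > 0" using p by (simp add: pattern_def)
  have E: "E \<in> lmeasurable" unfolding E_def by (rule lmeasurable_Int_reflect[OF A])
  have Q_sets: "Q k \<in> sets lebesgue" for k unfolding Q_def by (rule sets_lebesgue_floor)
  have "real m * measure lebesgue (E \<inter> Q 0) = (\<Sum>k\<in>{0..<int m}. measure lebesgue (E \<inter> Q 0))"
    by simp
  also have "\<dots> \<le> (\<Sum>k\<in>{0..<int m}. measure lebesgue (E \<inter> Q k) + \<eta>)"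
  proof (rule sum_mono)
    fix k assume k: "k \<in> {0..<int m}"
    let ?a = "k * h"
    have "measure lebesgue ((+) (- ?a) ` E - E)
        \<le> measure lebesgue ((+) (- ?a) ` A - A) + measure lebesgue ((+) ?a ` A - A)"
      unfolding E_def by (rule measure_translate_Diff_Int_reflect[OF A])
    also have "\<dots> \<le> \<eta>" using small[OF k] by simp
    finally have "measure lebesgue ((+) (- ?a) ` E - E) \<le> \<eta>" .
    moreover have "(+) (- ?a) ` Q 0 = Q k"
      using translate_floor_set[OF h, where Q = "\<lambda>a b. s a \<and> s b" and k = k] by (simp add: Q_def)
    ultimately show "measure lebesgue (E \<inter> Q 0) \<le> measure lebesgue (E \<inter> Q k) + \<eta>"
      using measure_Int_le_translate[OF E Q_sets[of 0], where a = "- ?a"] by simp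
  qed
  also have "\<dots> \<le> real M * measure lebesgue E + real m * \<eta>"
  proof -
    have "(\<Sum>k\<in>{0..<int m}. measure lebesgue (E \<inter> Q k)) \<le> real M * measure lebesgue E"
      using pattern_card_shift_reflect[OF p] E Q_sets by (intro sum_measure_Int_le) (auto simp: Q_def)
    then show ?thesis by (simp add: sum.distrib)
  qed
  finally have "measure lebesgue (E \<inter> Q 0) \<le> real M / real m * measure lebesgue E + \<eta>"
    using m by (simp add: field_simps)
  moreover have "B \<inter> {x. t - x \<in> B} = E \<inter> Q 0"
    unfolding B_def E_def Q_def by auto
  ultimately show ?thesis unfolding E_def by simp
qed

lemma exists_subset_pattern:
  fixes A :: "real set"
  assumes A: "A \<in> lmeasurable" "bounded A" and p: "pattern m s K M" and \<eta>: "\<eta> > 0"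
  obtains B where "B \<subseteq> A" "B \<in> sets lebesgue"
    "real K / real m * measure lebesgue A - \<eta> \<le> measure lebesgue B"
    "D B \<le> real M / real m * D A + \<eta>"
proof -
  obtain d where d: "d > 0" "\<And>u. \<bar>u\<bar> < d \<Longrightarrow> measure lebesgue ((+) u ` A - A) < \<eta> / 2"
    using measure_translate_Diff_small[OF A, of "\<eta> / 2"] \<eta> by auto
  define h where "h = d / (real m + 1)"
  have h: "h > 0" using d(1) by (simp add: h_def)
  have small: "measure lebesgue ((+) (k * h) ` A - A) < \<eta> / 2"
    "measure lebesgue ((+) (- (k * h)) ` A - A) < \<eta> / 2" if "k \<in> {0..<int m}" for k
  proof -
    have "k * h \<le> real m * h" using that h by (intro mult_right_mono) auto
    also have "\<dots> < d" using d(1) by (simp add: h_def field_simps)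
    finally have "\<bar>k * h\<bar> < d" using that h by simp
    then show "measure lebesgue ((+) (k * h) ` A - A) < \<eta> / 2"
      "measure lebesgue ((+) (- (k * h)) ` A - A) < \<eta> / 2"
      using d(2)[of "k * h"] d(2)[of "- (k * h)"] by simp_all
  qed
  define B where "B = A \<inter> {x. s \<lfloor>x / h\<rfloor>}"
  have B: "B \<subseteq> A" "B \<in> sets lebesgue"
    using fmeasurableD[OF A(1)] sets_lebesgue_floor[where Q = "\<lambda>a b. s a" and h = h] by (auto simp: B_def)
  have "real K / real m * measure lebesgue A - \<eta> \<le> measure lebesgue B"
    unfolding B_def by (rule measure_Int_pattern_ge[OF A(1) p h]) (use small in force)
  moreover have "D B \<le> real M / real m * D A + \<eta>"
  proof (rule D_least)
    show "B \<in> lmeasurable" using A(1) B by (rule fmeasurableI2)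
    fix t
    have "measure lebesgue (B \<inter> {x. t - x \<in> B})
        \<le> real M / real m * measure lebesgue (A \<inter> {x. t - x \<in> A}) + \<eta>"
      unfolding B_def
      by (rule measure_Int_reflect_pattern_le[OF A(1) p h]) (use small in force)
    also have "\<dots> \<le> real M / real m * D A + \<eta>"
      using D_upper[OF A(1), of t] by (intro add_right_mono mult_left_mono) auto
    finally show "measure lebesgue (B \<inter> {x. t - x \<in> B}) \<le> real M / real m * D A + \<eta>" .
  qed
  ultimately show thesis using B by (intro that)
qed

section \<open>Quadratic residues\<close>

lemma prime_factor_mod_4_eq_3:
  fixes n :: nat
  assumes "n mod 4 = 3"
  obtains q where "prime q" "q dvd n" "q mod 4 = 3"
  using assms
proof (induction n arbitrary: thesis rule: less_induct)
  case (less n)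
  have "n \<noteq> 1" using less.prems(2) by auto
  then obtain q where q: "prime q" "q dvd n" using prime_factor_nat by blast
  show thesis
  proof (cases "q mod 4 = 3")
    case True
    then show thesis using q less.prems(1) by blast
  next
    case False
    have "odd n" using less.prems(2) by presburger
    then have "odd q" using q(2) by (meson dvd_trans)
    then have q1: "q mod 4 = 1" using False by presburger
    obtain n' where n': "n = q * n'" using q(2) by blast
    have "n mod 4 = (q mod 4) * (n' mod 4) mod 4" unfolding n' by (simp add: mod_mult_eq)
    then have "n' mod 4 = 3" using q1 less.prems(2) by simp
    moreover have "n' < n"
    proof -
      have "1 * n' < q * n'"
        using \<open>n' mod 4 = 3\<close> prime_gt_1_nat[OF q(1)] by (intro mult_strict_right_mono) auto
      then show ?thesis unfolding n' by simp
    qed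
    ultimately obtain q' where "prime q'" "q' dvd n'" "q' mod 4 = 3"
      using less.IH by blast
    then show thesis using less.prems(1) unfolding n' by auto
  qed
qed

lemma primes_mod_4_eq_3_unbounded:
  fixes n :: nat
  obtains p where "prime p" "p mod 4 = 3" "n < p"
proof -
  have f: "fact n \<ge> (1::nat)" by (simp add: fact_ge_1)
  then have "4 * fact n - 1 = 4 * (fact n - 1) + (3::nat)" by arith
  then have "(4 * fact n - 1) mod 4 = (3::nat)" by simp
  then obtain q :: nat where q: "prime q" "q dvd 4 * fact n - 1" "q mod 4 = 3"
    by (rule prime_factor_mod_4_eq_3)
  have "n < q"
  proof (rule ccontr)
    assume "\<not> n < q"
    then have "q dvd 4 * fact n" using q(1) by (simp add: dvd_fact prime_gt_0_nat Suc_leI)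
    then have "q dvd 4 * fact n - (4 * fact n - 1)" using q(2) by (rule dvd_diff_nat)
    moreover have "4 * fact n - (4 * fact n - 1) = (1::nat)" using f by simp
    ultimately show False using q(1) by simp
  qed
  then show thesis using q that by blast
qed

locale prime_3_mod_4 =
  fixes p :: nat
  assumes prime: "prime p" and mod_4: "p mod 4 = 3"
begin

abbreviation L :: "int \<Rightarrow> int" where "L a \<equiv> Legendre a (int p)"

lemma p_gt_2: "p > 2"
  using prime_ge_2_nat[OF prime] mod_4 by (cases "p = 2") auto

lemma Legendre_cases: "L a = 0 \<or> L a = 1 \<or> L a = -1"
  unfolding Legendre_def by auto

lemma Legendre_one: "L 1 = 1"
proof -
  have "\<not> [1 = 0] (mod int p)" using p_gt_2 by (simp add: cong_0_iff)
  moreover have "QuadRes (int p) 1" unfolding QuadRes_def by (rule exI[of _ 1]) simp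
  ultimately show ?thesis unfolding Legendre_def by simp
qed

lemma Legendre_eq_0_iff: "L a = 0 \<longleftrightarrow> int p dvd a"
  unfolding Legendre_def by (auto simp: cong_0_iff)

lemma Legendre_cong:
  assumes "[a = b] (mod int p)"
  shows "L a = L b"
proof -
  have "[a = 0] (mod int p) \<longleftrightarrow> [b = 0] (mod int p)"
    using assms by (meson cong_sym cong_trans)
  moreover have "QuadRes (int p) a \<longleftrightarrow> QuadRes (int p) b"
    unfolding QuadRes_def using assms by (meson cong_sym cong_trans)
  ultimately show ?thesis unfolding Legendre_def by simp
qed

lemma Legendre_mod: "L (a mod int p) = L a"
  by (rule Legendre_cong) (simp add: cong_def)

lemma Legendre_eqI:
  assumes "[u = v] (mod int p)" "u \<in> {-1, 0, 1}" "v \<in> {-1, 0, 1}"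
  shows "u = v"
proof -
  have "[u + 1 = v + 1] (mod int p)" using assms(1) by (simp add: cong_add)
  then show ?thesis
    using assms(2,3) p_gt_2 cong_less_imp_eq_int[of "u + 1" "int p" "v + 1"] by auto
qed

lemma Legendre_mult: "L (a * b) = L a * L b"
proof (rule Legendre_eqI)
  have "[L (a * b) = (a * b) ^ ((p - 1) div 2)] (mod int p)"
    by (rule euler_criterion[OF prime p_gt_2])
  also have "(a * b) ^ ((p - 1) div 2) = a ^ ((p - 1) div 2) * b ^ ((p - 1) div 2)"
    by (simp add: power_mult_distrib)
  also have "[\<dots> = L a * L b] (mod int p)"
    using euler_criterion[OF prime p_gt_2, of a] euler_criterion[OF prime p_gt_2, of b]
    by (intro cong_mult) (auto simp: cong_sym)
  finally show "[L (a * b) = L a * L b] (mod int p)" .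
qed (use Legendre_cases[of "a * b"] Legendre_cases[of a] Legendre_cases[of b] in auto)

lemma Legendre_minus_one: "L (-1) = -1"
proof (rule Legendre_eqI)
  have "odd ((p - 1) div 2)"
    using mod_4 by presburger
  then show "[L (-1) = -1] (mod int p)"
    using euler_criterion[OF prime p_gt_2, of "-1"] by simp
qed (use Legendre_cases[of "-1"] in auto)

lemma Legendre_minus: "L (- a) = - L a"
  using Legendre_mult[of "-1" a] Legendre_minus_one by simp

lemma Legendre_square_mult:
  assumes "\<not> int p dvd x"
  shows "L (x * x * w) = L w"
proof -
  have "L x * L x = 1"
    using assms Legendre_eq_0_iff[of x] Legendre_cases[of x] by auto
  then show ?thesis by (simp add: Legendre_mult)
qed

lemma sum_Legendre_mod_reindex:
  assumes "inj_on (\<lambda>x. f x mod int p) {0..<int p}"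
  shows "(\<Sum>x\<in>{0..<int p}. L (f x)) = (\<Sum>x\<in>{0..<int p}. L x)"
  using sum_mod_reindex[OF assms, of L] by (simp add: Legendre_mod)

lemma sum_Legendre: "(\<Sum>x\<in>{0..<int p}. L x) = 0"
proof -
  have "(\<Sum>x\<in>{0..<int p}. L (0 - x)) = (\<Sum>x\<in>{0..<int p}. L x)"
    by (rule sum_Legendre_mod_reindex[OF inj_on_mod_diff])
  then show ?thesis by (simp add: Legendre_minus sum_negf)
qed

lemma sum_Legendre_add: "(\<Sum>x\<in>{0..<int p}. L (c + x)) = 0"
  using sum_Legendre_mod_reindex[OF inj_on_mod_add] sum_Legendre by simp

lemma sum_Legendre_diff: "(\<Sum>x\<in>{0..<int p}. L (c - x)) = 0"
  using sum_Legendre_mod_reindex[OF inj_on_mod_diff] sum_Legendre by simp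

lemma card_Legendre_eq_1: "card {x\<in>{0..<int p}. L x = 1} = (p - 1) div 2"
proof -
  have "2 * of_bool (L x = 1) = L x + of_bool (x \<noteq> 0)" if "x \<in> {0..<int p}" for x
    using that Legendre_cases[of x] Legendre_eq_0_iff[of x] zdvd_not_zless[of x "int p"]
    by (cases "x = 0") auto
  then have "2 * int (card {x\<in>{0..<int p}. L x = 1}) = (\<Sum>x\<in>{0..<int p}. L x + of_bool (x \<noteq> 0))"
    unfolding int_card_Collect_mem_eq_sum[OF finite_atLeastLessThan_int] sum_distrib_left
    by (intro sum.cong) auto
  also have "\<dots> = int (card {x\<in>{0..<int p}. x \<noteq> 0})"
    unfolding sum.distrib sum_Legendre int_card_Collect_mem_eq_sum[OF finite_atLeastLessThan_int] by simp
  also have "{x\<in>{0..<int p}. x \<noteq> 0} = {1..<int p}" by auto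
  finally have "2 * int (card {x\<in>{0..<int p}. L x = 1}) = int p - 1" using p_gt_2 by simp
  then show ?thesis by linarith
qed

lemma sum_Legendre_mult_reflect_eq:
  assumes "\<not> int p dvd j"
  shows "(\<Sum>x\<in>{0..<int p}. L (x * (j - x))) = (\<Sum>x\<in>{0..<int p}. L (x * (1 - x)))"
proof -
  have inj: "inj_on (\<lambda>x. j * x mod int p) {0..<int p}"
  proof (rule inj_onI, rule eq_if_dvd_diff)
    fix x y assume "j * x mod int p = j * y mod int p"
    then have "int p dvd j * (x - y)" by (simp add: mod_eq_dvd_iff right_diff_distrib)
    then show "int p dvd x - y"
      using assms prime by (simp add: prime_dvd_mult_iff)
  qed
  have periodic: "L (a mod int p * (j - a mod int p)) = L (a * (j - a))" for a
    by (intro Legendre_cong cong_mult cong_diff) (simp_all add: cong_def)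
  have "(\<Sum>x\<in>{0..<int p}. L (x * (j - x)))
      = (\<Sum>x\<in>{0..<int p}. L (j * x mod int p * (j - j * x mod int p)))"
    using sum_mod_reindex[OF inj, of "\<lambda>x. L (x * (j - x))"] by simp
  also have "\<dots> = (\<Sum>x\<in>{0..<int p}. L (j * j * (x * (1 - x))))"
    unfolding periodic by (simp add: algebra_simps)
  also have "\<dots> = (\<Sum>x\<in>{0..<int p}. L (x * (1 - x)))"
    using assms by (simp add: Legendre_square_mult)
  finally show ?thesis .
qed

lemma sum_sum_Legendre_mult_reflect: "(\<Sum>j\<in>{0..<int p}. \<Sum>x\<in>{0..<int p}. L (x * (j - x))) = 0"
proof -
  have "(\<Sum>j\<in>{0..<int p}. \<Sum>x\<in>{0..<int p}. L (x * (j - x)))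
      = (\<Sum>x\<in>{0..<int p}. L x * (\<Sum>j\<in>{0..<int p}. L (- x + j)))"
    by (subst sum.swap) (simp add: Legendre_mult sum_distrib_left)
  then show ?thesis by (simp only: sum_Legendre_add) simp
qed

lemma sum_Legendre_mult_reflect_zero: "(\<Sum>x\<in>{0..<int p}. L (x * (0 - x))) = - (int p - 1)"
proof -
  have "L (x * (0 - x)) = - of_bool (x \<noteq> 0)" if "x \<in> {0..<int p}" for x
  proof (cases "x = 0")
    case False
    then have "\<not> int p dvd x" using that zdvd_not_zless[of x "int p"] by auto
    then show ?thesis
      using Legendre_square_mult[of x 1] by (simp add: Legendre_minus Legendre_one False)
  qed (simp add: Legendre_eq_0_iff)
  then have "(\<Sum>x\<in>{0..<int p}. L (x * (0 - x))) = - int (card {x\<in>{0..<int p}. x \<noteq> 0})"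
    unfolding int_card_Collect_mem_eq_sum[OF finite_atLeastLessThan_int] sum_negf[symmetric]
    by (intro sum.cong) auto
  also have "{x\<in>{0..<int p}. x \<noteq> 0} = {1..<int p}" by auto
  finally show ?thesis using p_gt_2 by simp
qed

text \<open>A Jacobsthal sum, evaluated by averaging over \<open>j\<close>: it does not depend on \<open>j \<noteq> 0\<close>, and the
  sum over all \<open>j\<close> vanishes.\<close>

lemma sum_Legendre_mult_reflect:
  assumes "\<not> int p dvd j"
  shows "(\<Sum>x\<in>{0..<int p}. L (x * (j - x))) = 1"
proof -
  define T where "T j = (\<Sum>x\<in>{0..<int p}. L (x * (j - x)))" for j
  have "{0..<int p} = insert 0 {1..<int p}" using p_gt_2 by auto
  then have "0 = T 0 + (\<Sum>j\<in>{1..<int p}. T j)"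
    using sum_sum_Legendre_mult_reflect unfolding T_def by simp
  also have "(\<Sum>j\<in>{1..<int p}. T j) = (\<Sum>j\<in>{1..<int p}. T 1)"
    unfolding T_def
    by (intro sum.cong refl sum_Legendre_mult_reflect_eq) (auto simp: zdvd_not_zless)
  finally have "(int p - 1) * (T 1 - 1) = 0"
    using sum_Legendre_mult_reflect_zero p_gt_2 unfolding T_def by (simp add: algebra_simps)
  then have "T 1 = 1" using p_gt_2 by simp
  then show ?thesis
    using sum_Legendre_mult_reflect_eq[OF assms] unfolding T_def by simp
qed

lemma card_Legendre_reflect: "4 * card {x\<in>{0..<int p}. L x = 1 \<and> L (j - x) = 1} \<le> p + 1"
proof (cases "int p dvd j")
  case True
  then have "L (j - x) = - L x" for x
    using Legendre_cong[of "j - x" "- x"] Legendre_minus[of x] by (simp add: cong_iff_dvd_diff)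
  then have "{x\<in>{0..<int p}. L x = 1 \<and> L (j - x) = 1} = {}" by auto
  then show ?thesis by (metis card.empty le0 mult_0_right)
next
  case False
  have "4 * of_bool (L x = 1 \<and> L (j - x) = 1) \<le> 1 + L x + L (j - x) + L (x * (j - x))" for x
    using Legendre_cases[of x] Legendre_cases[of "j - x"] unfolding Legendre_mult by auto
  then have "int (4 * card {x\<in>{0..<int p}. L x = 1 \<and> L (j - x) = 1})
      \<le> (\<Sum>x\<in>{0..<int p}. 1 + L x + L (j - x) + L (x * (j - x)))"
    unfolding of_nat_mult int_card_Collect_mem_eq_sum[OF finite_atLeastLessThan_int] sum_distrib_left
    by (intro sum_mono) simp
  also have "\<dots> = int p + 1"
    unfolding sum.distrib sum_Legendre sum_Legendre_diff sum_Legendre_mult_reflect[OF False] by simp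
  finally show ?thesis by linarith
qed

end

lemma pattern_Legendre:
  assumes "prime p" "p mod 4 = 3"
  shows "pattern p (\<lambda>x. Legendre x (int p) = 1) ((p - 1) div 2) ((p + 1) div 4)"
proof -
  interpret prime_3_mod_4 p by unfold_locales (use assms in auto)
  have "card {x\<in>{0..<int p}. L x = 1 \<and> L (j - x) = 1} \<le> (p + 1) div 4" for j
    using card_Legendre_reflect[of j] by (simp add: less_eq_div_iff_mult_less_eq mult.commute)
  then show ?thesis
    using p_gt_2 card_Legendre_eq_1 unfolding pattern_def by (simp add: Legendre_mod)
qed

section \<open>Quasirandom densities\<close>

definition quasirandom_density :: "real \<Rightarrow> bool" where
  "quasirandom_density r \<longleftrightarrow> (\<forall>\<delta>>0. \<exists>m s K M. pattern m s K M \<and>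
     \<bar>real K / real m - r\<bar> < \<delta> \<and> real M / real m \<le> (real K / real m)\<^sup>2 + \<delta>)"

lemma quasirandom_density_0: "quasirandom_density 0"
proof -
  have "pattern 1 (\<lambda>_. False) 0 0" unfolding pattern_def by simp
  then show ?thesis unfolding quasirandom_density_def by force
qed

lemma quasirandom_density_one_minus:
  assumes "quasirandom_density r"
  shows "quasirandom_density (1 - r)"
  unfolding quasirandom_density_def
proof (intro allI impI)
  fix \<delta> :: real assume "\<delta> > 0"
  then obtain m s K M where p: "pattern m s K M" and close: "\<bar>real K / real m - r\<bar> < \<delta>"
    and corr: "real M / real m \<le> (real K / real m)\<^sup>2 + \<delta>"
    using assms unfolding quasirandom_density_def by blast
  define \<rho> where "\<rho> = real K / real m"
  have m: "m > 0" using p unfolding pattern_def by simp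
  have K: "K \<le> m" by (rule pattern_card_le[OF p])
  have \<rho>': "real (m - K) / real m = 1 - \<rho>"
    unfolding \<rho>_def using K m by (simp add: of_nat_diff field_simps)
  have "real (m + M - 2 * K) / real m \<le> (1 - \<rho>)\<^sup>2 + \<delta>"
  proof (cases "2 * K \<le> m + M")
    case True
    then have "real (m + M - 2 * K) / real m = 1 + real M / real m - 2 * \<rho>"
      unfolding \<rho>_def using m by (simp add: of_nat_diff field_simps)
    also have "\<dots> \<le> (1 - \<rho>)\<^sup>2 + \<delta>"
      using corr unfolding \<rho>_def by (simp add: power2_eq_square algebra_simps)
    finally show ?thesis .
  qed (use \<open>\<delta> > 0\<close> in simp)
  then show "\<exists>m s K M. pattern m s K M \<and> \<bar>real K / real m - (1 - r)\<bar> < \<delta> \<and>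
      real M / real m \<le> (real K / real m)\<^sup>2 + \<delta>"
  proof (intro exI conjI)
    show "pattern m (\<lambda>x. \<not> s x) (m - K) (m + M - 2 * K)" by (rule pattern_Not[OF p])
    show "\<bar>real (m - K) / real m - (1 - r)\<bar> < \<delta>"
      using close unfolding \<rho>' \<rho>_def by linarith
    show "real (m + M - 2 * K) / real m \<le> (real (m - K) / real m)\<^sup>2 + \<delta>"
      unfolding \<rho>' by fact
  qed
qed

lemma quasirandom_density_half: "quasirandom_density (1 / 2)"
  unfolding quasirandom_density_def
proof (intro allI impI)
  fix \<delta> :: real assume \<delta>: "\<delta> > 0"
  obtain p where p: "prime p" "p mod 4 = 3" "nat \<lceil>1 / \<delta>\<rceil> < p"
    by (rule primes_mod_4_eq_3_unbounded)
  have "1 / \<delta> < real p"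
    using real_nat_ceiling_ge[of "1 / \<delta>"] p(3) by (meson of_nat_less_iff order_le_less_trans)
  then have p\<delta>: "1 < real p * \<delta>"
    using \<delta> by (simp add: field_simps)
  have p1: "real p \<ge> 1" using prime_ge_1_nat[OF p(1)] by simp
  have K: "real ((p - 1) div 2) = (real p - 1) / 2"
    using p(2) p1 by (subst real_of_nat_div) (presburger, simp add: of_nat_diff)
  have M: "real ((p + 1) div 4) = (real p + 1) / 4"
    using p(2) by (subst real_of_nat_div) (presburger, simp)
  have "\<bar>(real p - 1) / 2 / real p - 1 / 2\<bar> = 1 / (2 * real p)"
    using p1 by (simp add: field_simps)
  also have "\<dots> < \<delta>" using p\<delta> p1 by (simp add: field_simps)
  finally have close: "\<bar>(real p - 1) / 2 / real p - 1 / 2\<bar> < \<delta>" .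
  have "4 * real p * 1 \<le> 4 * real p * (real p * \<delta>)"
    using p\<delta> p1 by (intro mult_left_mono) auto
  then have "3 * real p - 1 \<le> 4 * real p * (real p * \<delta>)"
    using p1 by linarith
  moreover have "((real p - 1) / 2 / real p)\<^sup>2 + \<delta> - (real p + 1) / 4 / real p
      = (4 * real p * (real p * \<delta>) - (3 * real p - 1)) / (4 * (real p)\<^sup>2)"
    using p1 by (simp add: field_simps power2_eq_square)
  moreover have "0 \<le> (4 * real p * (real p * \<delta>) - (3 * real p - 1)) / (4 * (real p)\<^sup>2)"
    using calculation by simp
  ultimately have corr: "(real p + 1) / 4 / real p \<le> ((real p - 1) / 2 / real p)\<^sup>2 + \<delta>"
    by linarith
  show "\<exists>m s K M. pattern m s K M \<and> \<bar>real K / real m - 1 / 2\<bar> < \<delta> \<and>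
      real M / real m \<le> (real K / real m)\<^sup>2 + \<delta>"
    using pattern_Legendre[OF p(1,2)] close corr unfolding K[symmetric] M[symmetric] by blast
qed

lemma quasirandom_density_mult:
  assumes r1: "quasirandom_density r1" "0 \<le> r1" "r1 \<le> 1"
    and r2: "quasirandom_density r2" "0 \<le> r2" "r2 \<le> 1"
  shows "quasirandom_density (r1 * r2)"
  unfolding quasirandom_density_def
proof (intro allI impI)
  fix \<delta> :: real assume "\<delta> > 0"
  define e where "e = min 1 \<delta> / 4"
  have e: "0 < e" "e \<le> 1" "4 * e \<le> \<delta>" unfolding e_def using \<open>\<delta> > 0\<close> by auto
  obtain m1 s1 K1 M1 where p1: "pattern m1 s1 K1 M1" and close1: "\<bar>real K1 / real m1 - r1\<bar> < e"
    and corr1: "real M1 / real m1 \<le> (real K1 / real m1)\<^sup>2 + e"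
    using r1(1) e(1) unfolding quasirandom_density_def by blast
  obtain m2 s2 K2 M2 where p2: "pattern m2 s2 K2 M2" and close2: "\<bar>real K2 / real m2 - r2\<bar> < e"
    and corr2: "real M2 / real m2 \<le> (real K2 / real m2)\<^sup>2 + e"
    using r2(1) e(1) unfolding quasirandom_density_def by blast
  define \<rho>1 \<rho>2 where "\<rho>1 = real K1 / real m1" and "\<rho>2 = real K2 / real m2"
  have \<rho>: "0 \<le> \<rho>1" "\<rho>1 \<le> 1" "0 \<le> \<rho>2" "\<rho>2 \<le> 1"
    using pattern_card_le[OF p1] pattern_card_le[OF p2] unfolding \<rho>1_def \<rho>2_def
    by (auto simp: divide_le_eq_1)
  have "\<bar>\<rho>1 * \<rho>2 - r1 * r2\<bar> = \<bar>(\<rho>1 - r1) * \<rho>2 + r1 * (\<rho>2 - r2)\<bar>"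
    by (simp add: algebra_simps)
  also have "\<dots> \<le> \<bar>\<rho>1 - r1\<bar> * \<rho>2 + r1 * \<bar>\<rho>2 - r2\<bar>"
    using \<rho> r1(2) by (intro order.trans[OF abs_triangle_ineq]) (simp add: abs_mult)
  also have "\<dots> \<le> \<bar>\<rho>1 - r1\<bar> + \<bar>\<rho>2 - r2\<bar>"
    using \<rho> r1(2,3) by (intro add_mono mult_left_le mult_left_le_one_le) auto
  also have "\<dots> < \<delta>" using close1 close2 e unfolding \<rho>1_def \<rho>2_def by simp
  finally have close: "\<bar>\<rho>1 * \<rho>2 - r1 * r2\<bar> < \<delta>" .
  have "real M1 / real m1 * (real M2 / real m2) \<le> (\<rho>1\<^sup>2 + e) * (\<rho>2\<^sup>2 + e)"
    using corr1 corr2 e(1) unfolding \<rho>1_def \<rho>2_def by (intro mult_mono) auto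
  also have "\<dots> = (\<rho>1 * \<rho>2)\<^sup>2 + e * (\<rho>1\<^sup>2 + \<rho>2\<^sup>2 + e)"
    by (simp add: power2_eq_square algebra_simps)
  also have "\<dots> \<le> (\<rho>1 * \<rho>2)\<^sup>2 + e * 3"
    using \<rho> e power_le_one[of \<rho>1 2] power_le_one[of \<rho>2 2]
    by (intro add_left_mono mult_left_mono) auto
  also have "\<dots> \<le> (\<rho>1 * \<rho>2)\<^sup>2 + \<delta>" using e by simp
  finally have corr: "real M1 / real m1 * (real M2 / real m2) \<le> (\<rho>1 * \<rho>2)\<^sup>2 + \<delta>" .
  show "\<exists>m s K M. pattern m s K M \<and> \<bar>real K / real m - r1 * r2\<bar> < \<delta> \<and>
      real M / real m \<le> (real K / real m)\<^sup>2 + \<delta>"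
    using pattern_times[OF p1 p2] close corr unfolding \<rho>1_def \<rho>2_def by (intro exI) auto
qed

lemma quasirandom_density_dyadic: "a \<le> 2 ^ k \<Longrightarrow> quasirandom_density (real a / 2 ^ k)"
proof (induction k arbitrary: a)
  case 0
  then have "a = 0 \<or> a = 1" by auto
  then show ?case using quasirandom_density_0 quasirandom_density_one_minus[of 0] by auto
next
  case (Suc k)
  have half: "quasirandom_density (1 / 2 * (real b / 2 ^ k))" if "b \<le> 2 ^ k" for b
    using that Suc.IH[OF that] quasirandom_density_half
    by (intro quasirandom_density_mult) (auto simp: field_simps)
  show ?case
  proof (cases "a \<le> 2 ^ k")
    case True
    then show ?thesis using half[of a] by (simp add: field_simps)
  next
    case False
    then have "real a / 2 ^ Suc k = 1 - 1 / 2 * (real (2 ^ Suc k - a) / 2 ^ k)"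
      using Suc.prems by (simp add: of_nat_diff field_simps)
    then show ?thesis
      using quasirandom_density_one_minus[OF half[of "2 ^ Suc k - a"]] False by simp
  qed
qed

lemma quasirandom_density_approx:
  assumes "\<And>\<delta>. \<delta> > 0 \<Longrightarrow> \<exists>r'. quasirandom_density r' \<and> \<bar>r' - r\<bar> < \<delta>"
  shows "quasirandom_density r"
  unfolding quasirandom_density_def
proof (intro allI impI)
  fix \<delta> :: real assume "\<delta> > 0"
  then obtain r' where r': "quasirandom_density r'" "\<bar>r' - r\<bar> < \<delta> / 2"
    using assms[of "\<delta> / 2"] by auto
  then obtain m s K M where "pattern m s K M" "\<bar>real K / real m - r'\<bar> < \<delta> / 2"
    "real M / real m \<le> (real K / real m)\<^sup>2 + \<delta> / 2"
    using \<open>\<delta> > 0\<close> unfolding quasirandom_density_def by (meson half_gt_zero)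
  then show "\<exists>m s K M. pattern m s K M \<and> \<bar>real K / real m - r\<bar> < \<delta> \<and>
      real M / real m \<le> (real K / real m)\<^sup>2 + \<delta>"
    using r'(2) by (intro exI[of _ m] exI[of _ s] exI[of _ K] exI[of _ M] conjI) (assumption | arith)+
qed

lemma quasirandom_density:
  assumes "0 \<le> r" "r \<le> 1"
  shows "quasirandom_density r"
proof (rule quasirandom_density_approx)
  fix \<delta> :: real assume "\<delta> > 0"
  obtain k :: nat where k: "(1 / 2) ^ k < \<delta>"
    using real_arch_pow_inv[of \<delta> "1 / 2"] \<open>\<delta> > 0\<close> by auto
  define a where "a = nat \<lfloor>r * 2 ^ k\<rfloor>"
  have "real a = \<lfloor>r * 2 ^ k\<rfloor>" unfolding a_def using assms(1) by simp
  then have a: "real a \<le> r * 2 ^ k" "r * 2 ^ k < real a + 1"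
    using of_int_floor_le[of "r * 2 ^ k"] real_of_int_floor_add_one_gt[of "r * 2 ^ k"] by linarith+
  have "r * 2 ^ k \<le> 1 * 2 ^ k" using assms(2) by (intro mult_right_mono) auto
  then have "real a \<le> 2 ^ k" using a(1) by linarith
  then have "a \<le> 2 ^ k" by (metis of_nat_le_iff of_nat_numeral of_nat_power)
  moreover have "\<bar>real a / 2 ^ k - r\<bar> < \<delta>"
  proof -
    have "\<bar>real a / 2 ^ k - r\<bar> = \<bar>real a - r * 2 ^ k\<bar> / 2 ^ k" by (simp add: field_simps)
    also have "\<dots> \<le> 1 / 2 ^ k" using a by (intro divide_right_mono) auto
    finally show ?thesis using k by (simp add: power_one_over)
  qed
  ultimately show "\<exists>r'. quasirandom_density r' \<and> \<bar>r' - r\<bar> < \<delta>"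
    using quasirandom_density_dyadic by blast
qed

section \<open>Scaling of \<open>Delta\<close>\<close>

lemma exists_subset_D_le_square:
  fixes A :: "real set"
  assumes A: "A \<in> lmeasurable" "bounded A" "measure lebesgue A \<le> 1"
    and r: "0 \<le> r" "r \<le> 1" and \<delta>: "0 < \<delta>" "\<delta> \<le> 1"
  obtains B where "B \<subseteq> A" "B \<in> sets lebesgue" "r * measure lebesgue A - 2 * \<delta> \<le> measure lebesgue B"
    "D B \<le> r\<^sup>2 * D A + 5 * \<delta>"
proof -
  obtain m s K M where p: "pattern m s K M" and close: "\<bar>real K / real m - r\<bar> < \<delta>"
    and corr: "real M / real m \<le> (real K / real m)\<^sup>2 + \<delta>"
    using quasirandom_density[OF r] \<delta>(1) unfolding quasirandom_density_def by blast
  define \<rho> where "\<rho> = real K / real m"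
  obtain B where B: "B \<subseteq> A" "B \<in> sets lebesgue" "\<rho> * measure lebesgue A - \<delta> \<le> measure lebesgue B"
    "D B \<le> real M / real m * D A + \<delta>"
    using exists_subset_pattern[OF A(1,2) p \<delta>(1)] unfolding \<rho>_def by blast
  have "\<bar>r * measure lebesgue A - \<rho> * measure lebesgue A\<bar> = \<bar>\<rho> - r\<bar> * measure lebesgue A"
    by (simp add: abs_mult abs_minus_commute left_diff_distrib[symmetric])
  also have "\<dots> \<le> \<delta> * 1"
    using close A(3) unfolding \<rho>_def by (intro mult_mono) auto
  finally have "r * measure lebesgue A - 2 * \<delta> \<le> measure lebesgue B" using B(3) by linarith
  moreover have "D B \<le> r\<^sup>2 * D A + 5 * \<delta>"
  proof -
    have "\<rho>\<^sup>2 \<le> (r + \<delta>)\<^sup>2" using close unfolding \<rho>_def by (intro power_mono) auto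
    also have "\<dots> = r\<^sup>2 + \<delta> * (2 * r + \<delta>)"
      by (simp add: power2_eq_square algebra_simps)
    also have "\<dots> \<le> r\<^sup>2 + \<delta> * 3"
      using r \<delta> by (intro add_left_mono mult_left_mono) auto
    finally have "real M / real m \<le> r\<^sup>2 + 4 * \<delta>" using corr unfolding \<rho>_def by simp
    then have "real M / real m * D A \<le> (r\<^sup>2 + 4 * \<delta>) * D A"
      using D_nonneg[OF A(1)] by (rule mult_right_mono)
    also have "\<dots> \<le> r\<^sup>2 * D A + 4 * \<delta>"
      using D_le_measure[OF A(1)] A(3) D_nonneg[OF A(1)] \<delta> by (simp add: distrib_right mult_left_le)
    finally show ?thesis using B(4) by linarith
  qed
  ultimately show thesis by (rule that[OF B(1,2)])
qed

lemma Delta_mult_le_D: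
  assumes r: "0 \<le> r" "r \<le> 1"
    and A: "A \<subseteq> {0..<1::real}" "A \<in> sets lebesgue" "measure lebesgue A = e"
  shows "Delta (r * e) \<le> r\<^sup>2 * D A"
proof (rule field_le_epsilon)
  fix \<epsilon> :: real assume "0 < \<epsilon>"
  define \<delta> where "\<delta> = min 1 \<epsilon> / 9"
  have \<delta>: "0 < \<delta>" "\<delta> \<le> 1" "9 * \<delta> \<le> \<epsilon>" unfolding \<delta>_def using \<open>0 < \<epsilon>\<close> by auto
  have unit: "{0..<1::real} \<in> lmeasurable" by (rule lmeasurable_subset_unit) auto
  have A_lmeas: "A \<in> lmeasurable" using A(1,2) by (rule lmeasurable_subset_unit)
  have e: "0 \<le> e" "e \<le> 1"
    using A measure_mono_fmeasurable[OF A(1,2) unit] by auto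
  obtain B where B: "B \<subseteq> A" "B \<in> sets lebesgue" "r * e - 2 * \<delta> \<le> measure lebesgue B"
    "D B \<le> r\<^sup>2 * D A + 5 * \<delta>"
    using exists_subset_D_le_square[OF A_lmeas bounded_subset[OF bounded_Ico A(1)] _ r \<delta>(1,2)] A(3) e
    by auto
  define b where "b = measure lebesgue B"
  have "B \<subseteq> {0..<1}" using B(1) A(1) by blast
  then have b: "0 \<le> b" "b \<le> 1"
    using measure_mono_fmeasurable[OF _ B(2) unit] unfolding b_def by simp_all
  have "Delta (r * e) \<le> Delta b + 4 * \<delta>"
  proof (cases "r * e \<le> b")
    case True
    then show ?thesis using Delta_mono[of "r * e" b] r e b \<delta> by simp
  next
    case False
    then show ?thesis using Delta_le_add[of b "r * e"] B(3) r e b by (simp add: b_def mult_le_one)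
  qed
  also have "Delta b \<le> D B"
    unfolding b_def using \<open>B \<subseteq> {0..<1}\<close> B(2) by (rule Delta_lower) simp
  finally show "Delta (r * e) \<le> r\<^sup>2 * D A + \<epsilon>" using B(4) \<delta> by linarith
qed

lemma Delta_mult_le:
  assumes "0 \<le> r" "r \<le> 1" "0 \<le> e" "e \<le> 1"
  shows "Delta (r * e) \<le> r\<^sup>2 * Delta e"
proof (cases "r = 0")
  case True
  have "Delta 0 \<le> D {}" by (rule Delta_lower) auto
  also have "\<dots> \<le> 0" using D_le_measure[of "{}"] by simp
  finally show ?thesis using True by simp
next
  case False
  then have "r\<^sup>2 > 0" by simp
  have "Delta (r * e) / r\<^sup>2 \<le> Delta e"
  proof (rule Delta_greatest)
    fix A assume "A \<subseteq> {0..<1::real}" "A \<in> sets lebesgue" "measure lebesgue A = e"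
    from Delta_mult_le_D[OF assms(1,2) this] show "Delta (r * e) / r\<^sup>2 \<le> D A"
      using \<open>r\<^sup>2 > 0\<close> by (simp add: divide_le_eq mult.commute)
  qed (use assms in auto)
  then show ?thesis using \<open>r\<^sup>2 > 0\<close> by (simp add: divide_le_eq mult.commute)
qed

lemma mono_on_Delta_div_square: "mono_on {0<..1} (\<lambda>\<epsilon>. Delta \<epsilon> / \<epsilon>\<^sup>2)"
proof (rule mono_onI)
  fix x y :: real assume xy: "x \<in> {0<..1}" "y \<in> {0<..1}" "x \<le> y"
  have "Delta (x / y * y) \<le> (x / y)\<^sup>2 * Delta y"
    using xy by (intro Delta_mult_le) auto
  then have "Delta x \<le> x\<^sup>2 * (Delta y / y\<^sup>2)"
    using xy by (simp add: power_divide)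
  then show "Delta x / x\<^sup>2 \<le> Delta y / y\<^sup>2"
    using xy by (simp add: divide_le_eq mult.commute)
qed

lemma mono_on_bounded_tendsto_at_right:
  fixes f :: "real \<Rightarrow> real"
  assumes "a < b" "mono_on {a<..b} f" "\<And>x. x \<in> {a<..b} \<Longrightarrow> c \<le> f x"
  shows "\<exists>L. (f \<longlongrightarrow> L) (at_right a)"
proof -
  have "(f \<longlongrightarrow> Inf (f ` ({a<..} \<inter> {a<..b}))) (at a within ({a<..} \<inter> {a<..b}))"
  proof (rule Lim_right_bound[where K = c])
    show "f x \<le> f y" if "x \<in> {a<..b}" "y \<in> {a<..b}" "a < x" "x \<le> y" for x y
      using mono_onD[OF assms(2)] that by blast
  qed (use assms(3) in auto)
  moreover have "at a within ({a<..} \<inter> {a<..b}) = at_right a"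
    using assms(1) by (intro at_within_nhd[where S = "{..<b}"]) auto
  ultimately show ?thesis by auto
qed

theorem theorem1p1:
  shows "(\<forall>x\<in>{0<..1}. \<forall>y\<in>{0<..1}. \<bar>Delta x - Delta y\<bar> \<le> 2 * \<bar>x - y\<bar>)
    \<and> continuous_on {0<..1} Delta
    \<and> mono_on {0<..1} (\<lambda>\<epsilon>. Delta \<epsilon> / \<epsilon>\<^sup>2)
    \<and> (\<exists>L. ((\<lambda>\<epsilon>. Delta \<epsilon> / \<epsilon>\<^sup>2) \<longlongrightarrow> L) (at_right 0))"
proof (intro conjI)
  show lipschitz: "\<forall>x\<in>{0<..1}. \<forall>y\<in>{0<..1}. \<bar>Delta x - Delta y\<bar> \<le> 2 * \<bar>x - y\<bar>"
    using Delta_lipschitz by auto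
  have "2-lipschitz_on {0<..1} Delta"
    using lipschitz by (intro lipschitz_onI) (auto simp: dist_real_def)
  then show "continuous_on {0<..1} Delta"
    by (rule lipschitz_on_continuous_on)
  show "mono_on {0<..1} (\<lambda>\<epsilon>. Delta \<epsilon> / \<epsilon>\<^sup>2)"
    by (rule mono_on_Delta_div_square)
  show "\<exists>L. ((\<lambda>\<epsilon>. Delta \<epsilon> / \<epsilon>\<^sup>2) \<longlongrightarrow> L) (at_right 0)"
    using mono_on_Delta_div_square Delta_nonneg
    by (intro mono_on_bounded_tendsto_at_right[where c = 0]) auto
qed

end
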